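(* For every $n\ge1$ and $a>0$, the quantities $r_n=r_n(a)$ satisfy the second-order difference equation $$a^2r_n^2=\frac{n+r_n}{2}\,(r_{n+1}+r_n)(r_n+r_{n-1}).$$ Equivalently, $y_n:=-2r_n/a^2$ satisfies $$(y_{n+1}+y_n)(y_n+y_{n-1})=\frac{-4y_n^2}{y_n-2n/a^2},$$ which is a case of the modified discrete Painlevé II equation $(x_{n-1}+x_n)(x_n+x_{n+1})=\frac{-4x_n^2+m^2}{\lambda x_n+z_n}$ with $m=0$, $\lambda=1$, $z_n=-2n/a^2$.
   Context: Fix $a>0$. Let $w(x)=e^{-x^2}\chi_{\mathbb{R}\setminus(-a,a)}(x)$. Let $P_n$ be the monic orthogonal polynomials for $w$ on $\mathbb{R}$, with $h_n=\int P_n^2w\,dx$. Define $$r_n(a)=\frac{2e^{-a^2}P_n(a)P_{n-1}(a)}{h_{n-1}(a)}\ (n\ge1),\qquad r_0(a)=0.$$ *)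

theory Defs
  imports "HOL-Analysis.Analysis" "HOL-Computational_Algebra.Polynomial"
begin

definition wgt :: "real \<Rightarrow> real \<Rightarrow> real" where
  "wgt a x = (if x \<in> - {-a<..<a} then exp (- (x^2)) else 0)"

definition wip :: "real \<Rightarrow> real poly \<Rightarrow> real poly \<Rightarrow> real" where
  "wip a p q = (LINT x|lborel. poly p x * poly q x * wgt a x)"

definition OP :: "real \<Rightarrow> nat \<Rightarrow> real poly" where
  "OP a n = (THE p. degree p = n \<and> lead_coeff p = 1 \<and>
                    (\<forall>q. degree q < n \<longrightarrow> wip a p q = 0))"

definition hn :: "real \<Rightarrow> nat \<Rightarrow> real" where
  "hn a n = wip a (OP a n) (OP a n)"

definition rn :: "real \<Rightarrow> nat \<Rightarrow> real" where
  "rn a n = (if n = 0 then 0 else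
     2 * exp (- (a^2)) * poly (OP a n) a * poly (OP a (n - 1)) a / hn a (n - 1))"

end

theory Submission
  imports Defs "HOL-Probability.Distributions"
begin

text \<open>
  The weight is even, so the monic orthogonal polynomials satisfy the symmetric three-term
  recurrence P(n+1) = x P(n) - beta(n) P(n-1) with beta(n) = h(n) / h(n-1).
  Integrating the derivative of P(n) P(n-1) exp(-x^2) over the complement of (-a,a), the
  boundary terms at a and -a give n + r(n) = 2 beta(n); evaluating the recurrence at x = a gives
  r(n+1) + r(n) = 2 a exp(-a^2) P(n)(a)^2 / h(n). Multiplying the last identity for n and n - 1
  by beta(n) yields a^2 r(n)^2.
  Since OP is defined by a description, the polynomials are built by the recurrence and then
  identified with OP by uniqueness.
\<close>

lemma integrable_power_gaussian: "integrable lborel (\<lambda>x::real. x^k * exp (-x\<^sup>2))"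
proof -
  have even_moment: "integrable lborel (\<lambda>x::real. exp (-x\<^sup>2) * x^(2*j))" for j
    using has_bochner_integral_even_function[OF gaussian_moment_even_pos[of j]]
    by (auto simp: integrable.intros)
  have "\<bar>x\<bar>^k \<le> 1 + x^(2*k)" for x :: real
  proof (cases "\<bar>x\<bar> \<le> 1")
    case True
    then have "\<bar>x\<bar>^k \<le> 1" by (simp add: power_le_one)
    moreover have "0 \<le> x^(2*k)" by (simp add: power_mult)
    ultimately show ?thesis by linarith
  next
    case False
    then have "\<bar>x\<bar>^k \<le> \<bar>x\<bar>^(2*k)" by (intro power_increasing) auto
    then show ?thesis by (simp add: power_mult)
  qed
  then have "norm (x^k * exp (-x\<^sup>2)) \<le> norm (exp (-x\<^sup>2) * x^(2*0) + exp (-x\<^sup>2) * x^(2*k))"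
    for x :: real
  proof -
    have "norm (x^k * exp (-x\<^sup>2)) = \<bar>x\<bar>^k * exp (-x\<^sup>2)"
      by (simp add: abs_mult power_abs)
    also have "\<dots> \<le> (1 + x^(2*k)) * exp (-x\<^sup>2)"
      using \<open>\<bar>x\<bar>^k \<le> 1 + x^(2*k)\<close> by (rule mult_right_mono) simp
    also have "\<dots> = norm (exp (-x\<^sup>2) * x^(2*0) + exp (-x\<^sup>2) * x^(2*k))"
      by (simp add: algebra_simps power_mult)
    finally show ?thesis .
  qed
  then show ?thesis
    by (intro Bochner_Integration.integrable_bound
          [OF Bochner_Integration.integrable_add[OF even_moment[of 0] even_moment[of k]]]) auto
qed

lemma poly_times_gaussian:
  fixes p :: "real poly"
  shows "poly p x * exp (-x\<^sup>2) = (\<Sum>i\<le>degree p. coeff p i * (x^i * exp (-x\<^sup>2)))"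
  by (simp add: poly_altdef sum_distrib_right mult.assoc)

lemma integrable_poly_gaussian:
  fixes p :: "real poly"
  shows "integrable lborel (\<lambda>x. poly p x * exp (-x\<^sup>2))"
  unfolding poly_times_gaussian
  by (intro Bochner_Integration.integrable_sum integrable_mult_right integrable_power_gaussian)

lemma integrable_indicator_poly_gaussian:
  fixes p :: "real poly"
  assumes "A \<in> sets borel"
  shows "integrable lborel (\<lambda>x. indicator A x * (poly p x * exp (-x\<^sup>2)))"
  using integrable_real_mult_indicator[OF _ integrable_poly_gaussian, of A p] assms
  by (simp add: mult.commute)

lemma tendsto_power_gaussian_at_top: "((\<lambda>x::real. x^k * exp (-x\<^sup>2)) \<longlongrightarrow> 0) at_top"
proof (rule Lim_null_comparison)
  show "((\<lambda>x::real. (x\<^sup>2)^k / exp (x\<^sup>2)) \<longlongrightarrow> 0) at_top"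
    by (rule filterlim_compose[OF tendsto_power_div_exp_0])
       (intro filterlim_pow_at_top filterlim_ident, auto)
  show "\<forall>\<^sub>F x in at_top. norm (x^k * exp (-x\<^sup>2)) \<le> (x\<^sup>2)^k / exp (x\<^sup>2)"
  proof (rule eventually_mono[OF eventually_ge_at_top[of 1]])
    fix x :: real
    assume x: "1 \<le> x"
    then have "x^k \<le> (x\<^sup>2)^k" by (simp add: power_increasing flip: power_mult)
    then show "norm (x^k * exp (-x\<^sup>2)) \<le> (x\<^sup>2)^k / exp (x\<^sup>2)"
      using x by (simp add: exp_minus field_simps)
  qed
qed

lemma tendsto_poly_gaussian_at_top:
  fixes p :: "real poly"
  shows "((\<lambda>x. poly p x * exp (-x\<^sup>2)) \<longlongrightarrow> 0) at_top"
  unfolding poly_times_gaussian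
  by (intro tendsto_null_sum tendsto_mult_right_zero tendsto_power_gaussian_at_top)

lemma integral_greaterThan_deriv_poly_gaussian:
  fixes p :: "real poly"
  shows "(LINT x|lborel. indicator {a<..} x * ((poly (pderiv p) x - 2 * x * poly p x) * exp (-x\<^sup>2)))
     = - poly p a * exp (-a\<^sup>2)"
proof -
  define f where "f x = (poly (pderiv p) x - 2 * x * poly p x) * exp (-x\<^sup>2)" for x
  define F where "F x = poly p x * exp (-x\<^sup>2)" for x
  have "(LBINT x=ereal a..\<infinity>. f x) = 0 - F a"
  proof (rule interval_integral_FTC_integrable)
    show "(F has_vector_derivative f x) (at x)" for x
      unfolding F_def f_def has_real_derivative_iff_has_vector_derivative[symmetric]
      by (auto intro!: derivative_eq_intros simp: algebra_simps)
    show "isCont f x" for x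
      unfolding f_def by (intro continuous_intros)
    have "f x = poly (pderiv p - pCons 0 (smult 2 p)) x * exp (-x\<^sup>2)" for x
      by (simp add: f_def)
    then show "set_integrable lborel (einterval (ereal a) \<infinity>) f"
      unfolding set_integrable_def
      using integrable_indicator_poly_gaussian[of "{a<..}" "pderiv p - pCons 0 (smult 2 p)"]
      by (simp add: einterval_def greaterThan_def)
    show "((F \<circ> real_of_ereal) \<longlongrightarrow> F a) (at_right (ereal a))"
      unfolding ereal_tendsto_simps1 F_def
      by (intro tendsto_intros tendsto_mono[OF at_le[of _ UNIV]] continuous_intros) auto
    show "((F \<circ> real_of_ereal) \<longlongrightarrow> 0) (at_left \<infinity>)"
      unfolding ereal_tendsto_simps1 F_def by (rule tendsto_poly_gaussian_at_top)
  qed simp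
  moreover have "(LBINT x=ereal a..\<infinity>. f x) = (LINT x|lborel. indicator {a<..} x * f x)"
    unfolding interval_lebesgue_integral_def einterval_def set_lebesgue_integral_def
    by (simp add: indicator_def)
  ultimately show ?thesis by (simp add: f_def F_def)
qed

definition wint :: "real \<Rightarrow> real poly \<Rightarrow> real" where
  "wint a p = (LINT x|lborel. poly p x * wgt a x)"

lemma wip_eq_wint: "wip a p q = wint a (p * q)"
  by (simp add: wip_def wint_def)

lemma wgt_eq_indicator: "wgt a x = indicator (- {-a<..<a}) x * exp (-x\<^sup>2)"
  by (simp add: wgt_def indicator_def)

lemma wgt_minus: "wgt a (-x) = wgt a x"
  by (auto simp: wgt_def)

lemma integrable_poly_wgt: "integrable lborel (\<lambda>x. poly p x * wgt a x)"
  unfolding wgt_eq_indicator mult.left_commute[of _ "indicator _ _"]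
  by (intro integrable_indicator_poly_gaussian) auto

lemma wint_add: "wint a (p + q) = wint a p + wint a q"
  unfolding wint_def by (simp add: distrib_right integrable_poly_wgt)

lemma wint_diff: "wint a (p - q) = wint a p - wint a q"
  unfolding wint_def by (simp add: left_diff_distrib integrable_poly_wgt)

lemma wint_smult: "wint a (smult c p) = c * wint a p"
  unfolding wint_def by (simp add: mult.assoc)

lemma integral_reflect_lborel: "(LINT x|lborel. f x) = (LINT x|lborel. f (- x :: real))"
  for f :: "real \<Rightarrow> real"
  using lborel_integral_real_affine[where c="-1" and t=0 and f=f] by simp

lemma wint_odd:
  assumes "\<And>x. poly p (-x) = - poly p x"
  shows "wint a p = 0"
proof -
  have "wint a p = (LINT x|lborel. poly p (-x) * wgt a (-x))"
    unfolding wint_def by (rule integral_reflect_lborel)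
  also have "\<dots> = - wint a p"
    by (simp add: assms wgt_minus wint_def)
  finally show ?thesis by simp
qed

lemma wint_eq_integral_greaterThan:
  assumes "a > 0"
  shows "wint a p = (LINT x|lborel. indicator {a<..} x * ((poly p x + poly p (-x)) * exp (-x\<^sup>2)))"
proof -
  define g where "g q x = indicator {a<..} x * (poly q x * exp (-x\<^sup>2))" for q x
  define p' where "p' = p \<circ>\<^sub>p [:0, -1:]"
  have p': "poly p' x = poly p (-x)" for x
    by (simp add: p'_def poly_pcompose)
  have int_g: "integrable lborel (g q)" for q
    unfolding g_def by (intro integrable_indicator_poly_gaussian) auto
  have int_g_minus: "integrable lborel (\<lambda>x. g q (-x))" for q
    using lborel_integrable_real_affine[OF int_g[of q], of "-1" 0] by simp
  have "AE x in lborel. poly p x * wgt a x = g p x + g p' (-x)"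
    using AE_lborel_singleton[of a] AE_lborel_singleton[of "-a"]
    by eventually_elim (use assms in \<open>auto simp: wgt_def g_def p' indicator_def\<close>)
  then have "wint a p = (LINT x|lborel. g p x + g p' (-x))"
    unfolding wint_def
    using borel_measurable_integrable[OF integrable_poly_wgt]
      borel_measurable_integrable[OF Bochner_Integration.integrable_add[OF int_g int_g_minus]]
    by (intro integral_cong_AE) auto
  also have "\<dots> = (LINT x|lborel. g p x) + (LINT x|lborel. g p' (-x))"
    using int_g int_g_minus by simp
  also have "(LINT x|lborel. g p' (-x)) = (LINT x|lborel. g p' x)"
    by (rule integral_reflect_lborel[symmetric])
  also have "(LINT x|lborel. g p x) + (LINT x|lborel. g p' x) = (LINT x|lborel. g p x + g p' x)"
    using int_g by simp
  finally show ?thesis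
    by (simp add: g_def p' algebra_simps)
qed

lemma wint_pderiv_gaussian:
  assumes "a > 0"
  shows "wint a (pderiv p - pCons 0 (smult 2 p)) = (poly p (-a) - poly p a) * exp (-a\<^sup>2)"
proof -
  define s where "s = p - p \<circ>\<^sub>p [:0, -1:]"
  have s: "poly s x = poly p x - poly p (-x)" for x
    by (simp add: s_def poly_pcompose)
  have s': "poly (pderiv s) x = poly (pderiv p) x + poly (pderiv p) (-x)" for x
    by (simp add: s_def pderiv_diff pderiv_pcompose poly_pcompose pderiv_pCons)
  have "wint a (pderiv p - pCons 0 (smult 2 p)) =
     (LINT x|lborel. indicator {a<..} x * ((poly (pderiv s) x - 2 * x * poly s x) * exp (-x\<^sup>2)))"
    unfolding wint_eq_integral_greaterThan[OF assms]
    by (rule Bochner_Integration.integral_cong) (auto simp: s s' algebra_simps)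
  also have "\<dots> = - poly s a * exp (-a\<^sup>2)"
    by (rule integral_greaterThan_deriv_poly_gaussian)
  finally show ?thesis by (simp add: s algebra_simps)
qed

lemma wint_square_pos:
  assumes "p \<noteq> 0"
  shows "wint a (p * p) > 0"
proof -
  define f where "f = (\<lambda>x. poly (p * p) x * wgt a x)"
  have f_nonneg: "f x \<ge> 0" for x
    by (simp add: f_def wgt_def)
  obtain b where b: "\<And>x. b \<le> norm x \<Longrightarrow> poly p x \<noteq> 0"
    using poly_eventually_not_zero[OF assms] by (auto simp: eventually_at_infinity)
  define c where "c = max b \<bar>a\<bar> + 1"
  have f_pos: "f x \<noteq> 0" if "x \<in> {c<..<c+1}" for x
  proof -
    have x: "x > \<bar>a\<bar>" "x > b"
      using that by (auto simp: c_def)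
    then show ?thesis
      using b[of x] by (auto simp: f_def wgt_def abs_less_iff)
  qed
  have int_f: "integrable lborel f"
    unfolding f_def by (rule integrable_poly_wgt)
  have wint_f: "wint a (p * p) = integral\<^sup>L lborel f"
    by (simp add: wint_def f_def)
  have "wint a (p * p) \<noteq> 0"
  proof
    assume "wint a (p * p) = 0"
    then have "AE x in lborel. f x = 0"
      using integral_nonneg_eq_0_iff_AE[OF int_f] f_nonneg wint_f by simp
    then obtain N where N: "{x \<in> space lborel. f x \<noteq> 0} \<subseteq> N" "N \<in> sets lborel"
        "emeasure lborel N = 0"
      by (auto elim: AE_E)
    have "emeasure lborel {c<..<c+1} \<le> emeasure lborel N"
      using f_pos N(1,2) by (intro emeasure_mono) auto
    with N(3) show False by simp
  qed
  moreover have "wint a (p * p) \<ge> 0"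
    using f_nonneg wint_f by simp
  ultimately show ?thesis by simp
qed

fun opoly :: "real \<Rightarrow> nat \<Rightarrow> real poly" where
  "opoly a 0 = 1"
| "opoly a (Suc 0) = [:0, 1:]"
| "opoly a (Suc (Suc n)) = pCons 0 (opoly a (Suc n)) -
     smult (wint a (opoly a (Suc n) * opoly a (Suc n)) / wint a (opoly a n * opoly a n)) (opoly a n)"

definition hnorm :: "real \<Rightarrow> nat \<Rightarrow> real" where
  "hnorm a n = wint a (opoly a n * opoly a n)"

lemma opoly_Suc_Suc:
  "opoly a (Suc (Suc n)) = pCons 0 (opoly a (Suc n)) - smult (hnorm a (Suc n) / hnorm a n) (opoly a n)"
  by (simp add: hnorm_def)

declare opoly.simps(3)[simp del]

lemma opoly_monic: "degree (opoly a n) = n \<and> coeff (opoly a n) n = 1"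
proof (induction a n rule: opoly.induct)
  case (3 a n)
  have lead: "coeff (opoly a (Suc (Suc n))) (Suc (Suc n)) = 1"
    using 3 by (simp add: opoly_Suc_Suc coeff_eq_0)
  have "degree (opoly a (Suc (Suc n))) \<le> Suc (Suc n)"
    unfolding opoly_Suc_Suc
    using 3 degree_pCons_le[of 0 "opoly a (Suc n)"] degree_smult_le[of _ "opoly a n"]
    by (intro degree_diff_le) auto
  moreover have "Suc (Suc n) \<le> degree (opoly a (Suc (Suc n)))"
    using lead by (intro le_degree) simp
  ultimately show ?case using lead by simp
qed auto

lemma degree_opoly [simp]: "degree (opoly a n) = n"
  using opoly_monic by blast

lemma coeff_opoly_degree [simp]: "coeff (opoly a n) n = 1"
  using opoly_monic by blast

lemma opoly_nonzero: "opoly a n \<noteq> 0"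
proof
  assume "opoly a n = 0"
  then have "coeff (opoly a n) n = 0" by simp
  then show False by simp
qed

lemma poly_opoly_minus: "poly (opoly a n) (-x) = (-1)^n * poly (opoly a n) x"
  by (induction a n rule: opoly.induct) (auto simp: opoly_Suc_Suc algebra_simps)

lemma hnorm_pos: "hnorm a n > 0"
  unfolding hnorm_def by (rule wint_square_pos[OF opoly_nonzero])

lemma wint_opoly_Suc_Suc_mult:
  "wint a (opoly a (Suc (Suc n)) * q) =
     wint a (opoly a (Suc n) * pCons 0 q) - hnorm a (Suc n) / hnorm a n * wint a (opoly a n * q)"
proof -
  have "opoly a (Suc (Suc n)) * q =
      opoly a (Suc n) * pCons 0 q - smult (hnorm a (Suc n) / hnorm a n) (opoly a n * q)"
    by (simp add: opoly_Suc_Suc algebra_simps)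
  then show ?thesis by (simp add: wint_diff wint_smult)
qed

lemma degree_less_if_coeff_eq_0:
  fixes r :: "'a::zero poly"
  assumes "degree r \<le> k" "coeff r k = 0" "r \<noteq> 0"
  shows "degree r < k"
  using assms leading_coeff_neq_0[of r] by (auto simp: le_less)

lemma degree_minus_smult_opoly:
  assumes "degree q \<le> k"
  shows "degree (q - smult (coeff q k) (opoly a k)) < k \<or> q - smult (coeff q k) (opoly a k) = 0"
proof -
  have "degree (q - smult (coeff q k) (opoly a k)) \<le> k"
    using assms degree_smult_le[of "coeff q k" "opoly a k"] by (intro degree_diff_le) auto
  moreover have "coeff (q - smult (coeff q k) (opoly a k)) k = 0"
    by simp
  ultimately show ?thesis
    using degree_less_if_coeff_eq_0 by blast
qed

lemma wint_opoly_mult_degree_le: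
  assumes orth: "\<And>q. degree q < k \<Longrightarrow> wint a (opoly a k * q) = 0" and "degree q \<le> k"
  shows "wint a (opoly a k * q) = coeff q k * hnorm a k"
proof -
  define r where "r = q - smult (coeff q k) (opoly a k)"
  have "r = 0 \<or> degree r < k"
    using degree_minus_smult_opoly[OF assms(2), of a] by (auto simp: r_def)
  then have "wint a (opoly a k * r) = 0"
    by (elim disjE) (simp add: wint_def, simp add: orth)
  moreover have "opoly a k * q = smult (coeff q k) (opoly a k * opoly a k) + opoly a k * r"
    by (simp add: r_def algebra_simps)
  ultimately show ?thesis
    by (simp add: wint_add wint_smult hnorm_def)
qed

lemma wint_opoly_mult_degree_less: "degree q < n \<Longrightarrow> wint a (opoly a n * q) = 0"
proof (induction a n arbitrary: q rule: opoly.induct)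
  case (2 a)
  then have "degree q = 0"
    by simp
  then obtain c where "q = [:c:]"
    by (rule degree_eq_zeroE)
  then show ?case by (intro wint_odd) simp
next
  case (3 a n)
  have proj_n: "wint a (opoly a n * r) = coeff r n * hnorm a n" if "degree r \<le> n" for r
    using _ that by (rule wint_opoly_mult_degree_le) (auto intro: "3.IH")
  have proj_Suc_n: "wint a (opoly a (Suc n) * r) = coeff r (Suc n) * hnorm a (Suc n)"
    if "degree r \<le> Suc n" for r
    using _ that by (rule wint_opoly_mult_degree_le) (auto intro: "3.IH")
  define c where "c = coeff q (Suc n)"
  define r where "r = q - smult c (opoly a (Suc n))"
  have "degree r \<le> n"
    using degree_minus_smult_opoly[of q "Suc n" a] "3.prems" by (auto simp: r_def c_def)
  have top: "wint a (opoly a (Suc (Suc n)) * opoly a (Suc n)) = 0"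
  proof -
    have "wint a (opoly a (Suc n) * pCons 0 (opoly a (Suc n))) = 0"
      by (intro wint_odd) (simp add: poly_opoly_minus)
    moreover have "wint a (opoly a (Suc n) * opoly a n) = 0"
      by (auto intro: "3.IH")
    ultimately show ?thesis
      by (simp add: wint_opoly_Suc_Suc_mult mult.commute[of "opoly a n"])
  qed
  have rest: "wint a (opoly a (Suc (Suc n)) * r) = 0"
    using proj_Suc_n[of "pCons 0 r"] proj_n[of r] \<open>degree r \<le> n\<close> hnorm_pos[of a n]
    by (simp add: wint_opoly_Suc_Suc_mult)
  have "opoly a (Suc (Suc n)) * q = smult c (opoly a (Suc (Suc n)) * opoly a (Suc n))
      + opoly a (Suc (Suc n)) * r"
    by (simp add: r_def distrib_left right_diff_distrib)
  then show ?case
    by (simp add: wint_add wint_smult top rest)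
qed simp

lemma wint_opoly_mult_degree_eq:
  "degree q \<le> k \<Longrightarrow> wint a (opoly a k * q) = coeff q k * hnorm a k"
  by (intro wint_opoly_mult_degree_le wint_opoly_mult_degree_less)

lemma OP_eq_opoly: "OP a n = opoly a n"
  unfolding OP_def
proof (rule the_equality)
  show "degree (opoly a n) = n \<and> lead_coeff (opoly a n) = 1 \<and>
      (\<forall>q. degree q < n \<longrightarrow> wip a (opoly a n) q = 0)"
    by (simp add: wip_eq_wint wint_opoly_mult_degree_less)
next
  fix p
  assume p: "degree p = n \<and> lead_coeff p = 1 \<and> (\<forall>q. degree q < n \<longrightarrow> wip a p q = 0)"
  define d where "d = p - opoly a n"
  have "degree d \<le> n" "coeff d n = 0"
    using p by (auto simp: d_def intro: degree_diff_le)
  then have "d = 0 \<or> degree d < n"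
    using degree_less_if_coeff_eq_0 by blast
  moreover have "wint a (d * d) = 0" if "degree d < n"
    using p that by (simp add: d_def left_diff_distrib wint_diff wip_eq_wint wint_opoly_mult_degree_less)
  ultimately have "d = 0"
    using wint_square_pos[of d a] by force
  then show "p = opoly a n"
    by (simp add: d_def)
qed

lemma hn_eq_hnorm: "hn a n = hnorm a n"
  by (simp add: hn_def OP_eq_opoly wip_eq_wint hnorm_def)

lemma rn_Suc:
  "rn a (Suc k) = 2 * exp (-a\<^sup>2) * poly (opoly a (Suc k)) a * poly (opoly a k) a / hnorm a k"
  by (simp add: rn_def OP_eq_opoly hn_eq_hnorm)

lemma hnorm_Suc:
  assumes "a > 0"
  shows "2 * hnorm a (Suc k) =
    real (Suc k) * hnorm a k + 2 * exp (-a\<^sup>2) * poly (opoly a (Suc k)) a * poly (opoly a k) a"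
proof -
  define p where "p = opoly a (Suc k) * opoly a k"
  have p': "pderiv p - pCons 0 (smult 2 p) =
     opoly a (Suc k) * pderiv (opoly a k) + opoly a k * pderiv (opoly a (Suc k))
       - smult 2 (opoly a (Suc k) * pCons 0 (opoly a k))"
    by (simp add: p_def pderiv_mult)
  have lower: "wint a (opoly a (Suc k) * pderiv (opoly a k)) = 0"
    by (intro wint_opoly_mult_degree_less) (simp add: degree_pderiv)
  have deriv: "wint a (opoly a k * pderiv (opoly a (Suc k))) = real (Suc k) * hnorm a k"
    by (simp add: wint_opoly_mult_degree_eq degree_pderiv coeff_pderiv)
  have shift: "wint a (opoly a (Suc k) * pCons 0 (opoly a k)) = hnorm a (Suc k)"
    using wint_opoly_mult_degree_eq[of "pCons 0 (opoly a k)" "Suc k" a] by simp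
  have "wint a (pderiv p - pCons 0 (smult 2 p)) = real (Suc k) * hnorm a k - 2 * hnorm a (Suc k)"
    by (simp only: p' wint_add wint_diff wint_smult lower deriv shift)
  moreover have "poly p (-a) = - poly p a"
    by (simp add: p_def poly_opoly_minus)
  then have "wint a (pderiv p - pCons 0 (smult 2 p)) = - 2 * poly p a * exp (-a\<^sup>2)"
    using wint_pderiv_gaussian[OF assms, of p] by simp
  ultimately show ?thesis
    by (simp add: p_def algebra_simps)
qed

lemma real_plus_rn_Suc:
  assumes "a > 0"
  shows "real (Suc k) + rn a (Suc k) = 2 * hnorm a (Suc k) / hnorm a k"
  using hnorm_Suc[OF assms, of k] hnorm_pos[of a k] by (simp add: rn_Suc field_simps)

lemma rn_Suc_plus_rn:
  "rn a (Suc k) + rn a k = 2 * exp (-a\<^sup>2) * a * (poly (opoly a k) a)\<^sup>2 / hnorm a k"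
proof (cases k)
  case 0
  have "rn a 0 = 0"
    by (simp add: rn_def)
  with 0 show ?thesis
    by (simp add: rn_Suc)
next
  case (Suc j)
  then show ?thesis
    using hnorm_pos[of a j] hnorm_pos[of a "Suc j"]
    by (simp add: rn_Suc opoly_Suc_Suc field_simps power2_eq_square)
qed

lemma difference_equation_imp_mdPII:
  fixes a N R S T :: real
  assumes a: "a \<noteq> 0" and NR: "N + R \<noteq> 0" and "a^2 * R^2 = (N + R) / 2 * (S + R) * (R + T)"
  shows "(- 2 * S / a^2 + - 2 * R / a^2) * (- 2 * R / a^2 + - 2 * T / a^2)
          = - 4 * (- 2 * R / a^2)^2 / (- 2 * R / a^2 - 2 * N / a^2)"
proof -
  have ST: "(S + R) * (R + T) = 2 * a^2 * R^2 / (N + R)"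
    using assms(3) NR by (simp add: field_simps)
  have "(- 2 * S / a^2 + - 2 * R / a^2) * (- 2 * R / a^2 + - 2 * T / a^2)
      = 4 * ((S + R) * (R + T)) / a^4"
    using a by (simp add: field_simps power2_eq_square power4_eq_xxxx)
  also have "\<dots> = 8 * R^2 / (a^2 * (N + R))"
    unfolding ST using a NR by (auto simp: divide_simps power2_eq_square power4_eq_xxxx)
  also have "- 2 * R / a^2 - 2 * N / a^2 = -2 * (N + R) / a^2"
    using a by (simp add: field_simps)
  then have "8 * R^2 / (a^2 * (N + R)) = - 4 * (- 2 * R / a^2)^2 / (- 2 * R / a^2 - 2 * N / a^2)"
    using a NR by (auto simp: divide_simps power2_eq_square algebra_simps)
  finally show ?thesis .
qed

theorem mainTheorem3:
  fixes a :: real and n :: nat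
  assumes "a > 0" and "n \<ge> 1"
  shows "a^2 * (rn a n)^2 =
           (real n + rn a n) / 2 * (rn a (n+1) + rn a n) * (rn a n + rn a (n-1))
         \<and> (let y = (\<lambda>k. - 2 * rn a k / a^2) in
              (y (n+1) + y n) * (y n + y (n-1)) = - 4 * (y n)^2 / (y n - 2 * real n / a^2))"
proof -
  obtain k where n: "n = Suc k"
    using assms(2) by (cases n) auto
  define e where "e = exp (-a\<^sup>2)"
  have h: "hnorm a k > 0" "hnorm a n > 0"
    by (rule hnorm_pos)+
  have beta: "(real n + rn a n) / 2 = hnorm a n / hnorm a k"
    using real_plus_rn_Suc[OF assms(1), of k] by (simp add: n)
  have sum_n: "rn a (n+1) + rn a n = 2 * e * a * (poly (opoly a n) a)\<^sup>2 / hnorm a n"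
    using rn_Suc_plus_rn[of a n] by (simp add: e_def)
  have sum_k: "rn a n + rn a (n-1) = 2 * e * a * (poly (opoly a k) a)\<^sup>2 / hnorm a k"
    using rn_Suc_plus_rn[of a k] by (simp add: n e_def)
  have r_n: "rn a n = 2 * e * poly (opoly a n) a * poly (opoly a k) a / hnorm a k"
    by (simp add: n e_def rn_Suc)
  have difference_equation:
    "a^2 * (rn a n)^2 = (real n + rn a n) / 2 * (rn a (n+1) + rn a n) * (rn a n + rn a (n-1))"
    unfolding beta sum_n sum_k unfolding r_n
    using h by (simp add: field_simps power2_eq_square)
  moreover have "real n + rn a n \<noteq> 0"
    using beta h by force
  ultimately show ?thesis
    using difference_equation_imp_mdPII[of a "real n" "rn a n" "rn a (n+1)" "rn a (n-1)"] assms(1)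
    by (simp add: Let_def)
qed

end
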